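(* Fix $c\in(0,\infty)$. Let $E=\mathbb{C}\times L^1([-2,0];\mathbb{C})$ (a Banach lattice with the componentwise order) and define $A$ on $E$ by $D(A)=\{(x,f)\in\mathbb{C}\times W^{1,1}((-2,0);\mathbb{C}) : f(0)=x\}$, $A(x,f)=(\langle\Phi,f\rangle, f')$, where $\langle\Phi,f\rangle = c\Big(\int_{-2}^{-1} f(s)\,ds - \int_{-1}^0 f(s)\,ds + f(-2) - f(0)\Big)$. Let $u:=(1,\mathbb{1}_{[-2,0]})\in E$ and let $\varphi=(1,c\mathbb{1})\in E'$, i.e. $\langle\varphi,(x,f)\rangle = x + c\int_{-2}^0 f(s)\,ds$. Then: (1) there is $\varepsilon>0$ such that $(0,\varepsilon)\subseteq\rho(A)$ and $R(\mu,A)\succeq u\otimes\varphi$ for all $\mu\in(0,\varepsilon)$; (2) there is $\varepsilon>0$ such that $(-\varepsilon,0)\subseteq\rho(A)$ and $R(\mu,A)\preceq -u\otimes\varphi$ for all $\mu\in(-\varepsilon,0)$.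
   Context: $R(\mu,A)=(\mu-A)^{-1}$. $u\otimes\varphi$ is the operator $h\mapsto\langle\varphi,h\rangle u$. For bounded real operators $T,S$ on $E$, $T\succeq S$ (equivalently $S\preceq T$) means there is $c'>0$ such that $T-c'S$ maps the positive cone $E_+$ into itself. *)

theory Defs
  imports "HOL-Analysis.Analysis"
begin

text \<open>Elements of E = C x L^1([-2,0];C) are represented by pairs (x, f) with f an
  absolutely integrable function on [-2,0]; two representatives denote the same
  element iff they agree in the first component and almost everywhere on [-2,0].\<close>

type_synonym elt = "complex \<times> (real \<Rightarrow> complex)"

definition inE :: "elt \<Rightarrow> bool" where
  "inE v \<longleftrightarrow> snd v absolutely_integrable_on {-2..0}"

definition eqE :: "elt \<Rightarrow> elt \<Rightarrow> bool" where
  "eqE v w \<longleftrightarrow> fst v = fst w \<and> (AE s in lborel. s \<in> {-2..0} \<longrightarrow> snd v s = snd w s)"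

definition normE :: "elt \<Rightarrow> real" where
  "normE v = cmod (fst v) + integral {-2..0} (\<lambda>s. cmod (snd v s))"

definition scaleE :: "complex \<Rightarrow> elt \<Rightarrow> elt" where
  "scaleE a v = (a * fst v, \<lambda>s. a * snd v s)"

definition diffE :: "elt \<Rightarrow> elt \<Rightarrow> elt" where
  "diffE v w = (fst v - fst w, \<lambda>s. snd v s - snd w s)"

definition posE :: "elt \<Rightarrow> bool" where
  "posE v \<longleftrightarrow> fst v \<in> \<real> \<and> 0 \<le> Re (fst v) \<and>
     (AE s in lborel. s \<in> {-2..0} \<longrightarrow> snd v s \<in> \<real> \<and> 0 \<le> Re (snd v s))"

text \<open>f is the absolutely continuous (W^{1,1}) representative with weak derivative g.\<close>
definition W11_rep :: "(real \<Rightarrow> complex) \<Rightarrow> (real \<Rightarrow> complex) \<Rightarrow> bool" where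
  "W11_rep f g \<longleftrightarrow> g absolutely_integrable_on {-2..0} \<and>
     (\<forall>t\<in>{-2..0}. f t = f (-2) + integral {-2..t} g)"

definition Phi :: "real \<Rightarrow> (real \<Rightarrow> complex) \<Rightarrow> complex" where
  "Phi c f = of_real c * (integral {-2..-1} f - integral {-1..0} f + f (-2) - f 0)"

text \<open>Graph of A: A_graph c v w means v \<in> D(A) and A v = w.\<close>
definition A_graph :: "real \<Rightarrow> elt \<Rightarrow> elt \<Rightarrow> bool" where
  "A_graph c v w \<longleftrightarrow> inE v \<and>
     (\<exists>f g. W11_rep f g \<and> eqE v (f 0, f) \<and> eqE w (Phi c f, g))"

definition in_resolvent_set :: "real \<Rightarrow> complex \<Rightarrow> bool" where
  "in_resolvent_set c \<mu> \<longleftrightarrow>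
     (\<forall>h. inE h \<longrightarrow> (\<exists>v w. A_graph c v w \<and> eqE (diffE (scaleE \<mu> v) w) h)) \<and>
     (\<forall>v w. A_graph c v w \<and> eqE (diffE (scaleE \<mu> v) w) (0, \<lambda>_. 0) \<longrightarrow> eqE v (0, \<lambda>_. 0)) \<and>
     (\<exists>M. \<forall>v w. A_graph c v w \<longrightarrow> normE v \<le> M * normE (diffE (scaleE \<mu> v) w))"

text \<open>R(mu,A) h: (a representative of) the unique v \<in> D(A) with (mu - A) v = h.\<close>
definition resolvent :: "real \<Rightarrow> complex \<Rightarrow> elt \<Rightarrow> elt" where
  "resolvent c \<mu> h = (SOME v. \<exists>w. A_graph c v w \<and> eqE (diffE (scaleE \<mu> v) w) h)"

definition uE :: elt where
  "uE = (1, \<lambda>_. 1)"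

definition phiE :: "real \<Rightarrow> elt \<Rightarrow> complex" where
  "phiE c h = fst h + of_real c * integral {-2..0} (snd h)"

definition tensorE :: "elt \<Rightarrow> (elt \<Rightarrow> complex) \<Rightarrow> elt \<Rightarrow> elt" where
  "tensorE u \<phi> h = scaleE (\<phi> h) u"

definition succeqE :: "(elt \<Rightarrow> elt) \<Rightarrow> (elt \<Rightarrow> elt) \<Rightarrow> bool" where
  "succeqE T S \<longleftrightarrow> (\<exists>c'>0. \<forall>h. inE h \<and> posE h \<longrightarrow>
      posE (diffE (T h) (scaleE (of_real c') (S h))))"

end

theory Submission
  imports Defs
begin

text \<open>Solving (\<mu> - A)(x, f) = (y, k) amounts to the ODE f' = \<mu> f - k with f 0 = x, together
  with the boundary condition \<mu> x - \<Phi> f = y. Variation of constants gives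
  f t = exp (\<mu> t) x + F t with F t = \<integral> exp (\<mu> (t - s)) k s ds over [t, 0], and the boundary condition
  becomes \<Delta>(\<mu>) x = y + \<Phi> F with \<Delta>(\<mu>) = \<mu> - \<Phi>(exp (\<mu> \<cdot>)). An explicit computation gives
  1 \<le> \<Delta>(\<mu>)/\<mu> \<le> 1 + 4c for 0 < |\<mu>| \<le> 1/10, so these \<mu> lie in \<rho>(A).
  For h \<ge> 0 and |\<mu>| \<le> 1/10 the kernel exp (\<mu> (t - s)) lies in [4/5, 5/4], so F t is comparable
  to the integral of k over [t, 0]; this yields \<Phi> F \<ge> (c/4) \<integral> k and hence \<mu> x \<ge> \<langle>\<phi>, h\<rangle> / (4 (1 + 4c)).
  For small \<mu> > 0 this forces f \<ge> (4/5) x, which is of order \<langle>\<phi>, h\<rangle>/\<mu>; for small \<mu> < 0 the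
  large negative x dominates F \<le> (5/4) \<integral> k, giving R(\<mu>, A) h \<le> -(5/(4c)) \<langle>\<phi>, h\<rangle> u.\<close>

section \<open>Integration and linear integral equations\<close>

lemma sigma_finite_lebesgue: "sigma_finite_measure (lebesgue :: 'a::euclidean_space measure)"
proof
  show "\<exists>A::'a set set. countable A \<and> A \<subseteq> sets lebesgue \<and> \<Union>A = space lebesgue \<and>
      (\<forall>a\<in>A. emeasure lebesgue a \<noteq> \<infinity>)"
  proof (intro exI conjI)
    show "\<Union>(range (\<lambda>n::nat. cball 0 (real n))) = space (lebesgue :: 'a measure)"
      by (auto simp: real_arch_simple)
  qed (use emeasure_lborel_cball_finite in \<open>auto simp: emeasure_completion less_top[symmetric]\<close>)
qed

interpretation lebesgue_real: sigma_finite_measure "lebesgue :: real measure"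
  by (rule sigma_finite_lebesgue)

interpretation lebesgue_real_pair: pair_sigma_finite "lebesgue :: real measure" "lebesgue :: real measure" ..

lemma bilinear_scaleR: "bilinear (\<lambda>(a::real) (x::'a::real_vector). a *\<^sub>R x)"
  by (simp add: bilinear_def)

lemma absolutely_integrable_continuous_scaleR:
  fixes p :: "real \<Rightarrow> real" and q :: "real \<Rightarrow> 'a::euclidean_space"
  assumes "continuous_on {a..b} p" "q absolutely_integrable_on {a..b}"
  shows "(\<lambda>x. p x *\<^sub>R q x) absolutely_integrable_on {a..b}"
  by (rule absolutely_integrable_bounded_measurable_product[OF bilinear_scaleR])
    (auto intro: continuous_imp_measurable_on_sets_lebesgue compact_imp_bounded
      compact_continuous_image assms)

lemma lebesgue_integral_indicator_eq_integral:
  fixes f :: "'a::euclidean_space \<Rightarrow> 'b::euclidean_space"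
  assumes "f absolutely_integrable_on S"
  shows "(LINT x|lebesgue. indicator S x *\<^sub>R f x) = integral S f"
  using set_lebesgue_integral_eq_integral(2)[OF assms] unfolding set_lebesgue_integral_def .

lemma integrable_triangle_kernel:
  fixes p :: "real \<Rightarrow> real" and q :: "real \<Rightarrow> 'a::euclidean_space"
  assumes "p absolutely_integrable_on {a..b}" "q absolutely_integrable_on {a..b}"
  shows "integrable (lebesgue \<Otimes>\<^sub>M lebesgue)
    (\<lambda>(s, r). if r \<le> s then (indicator {a..b} s * p s) *\<^sub>R (indicator {a..b} r *\<^sub>R q r) else 0)"
proof -
  define p' where "p' s = indicator {a..b} s * p s" for s
  define q' where "q' r = indicator {a..b} r *\<^sub>R q r" for r
  have pint: "integrable lebesgue p'" and qint: "integrable lebesgue q'"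
    using assms unfolding p'_def q'_def set_integrable_def by simp_all
  have [measurable]: "p' \<in> borel_measurable lebesgue" "q' \<in> borel_measurable lebesgue"
    using pint qint by (auto intro: borel_measurable_integrable)
  have [measurable]: "(\<lambda>x::real. x) \<in> borel_measurable lebesgue"
    by (simp add: measurable_completion)
  have "integrable (lebesgue \<Otimes>\<^sub>M lebesgue) (\<lambda>(s, r). p' s *\<^sub>R q' r)"
    using pint qint by (intro lebesgue_real_pair.Fubini_integrable)
      (auto simp: integrable_mult_left integrable_norm)
  then show ?thesis
    unfolding p'_def[symmetric] q'_def[symmetric]
    by (rule Bochner_Integration.integrable_bound) auto
qed

lemma integral_triangle_swap:
  fixes p :: "real \<Rightarrow> real" and q :: "real \<Rightarrow> 'a::euclidean_space"
  assumes p: "continuous_on {a..b} p" and q: "q absolutely_integrable_on {a..b}"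
  shows "integral {a..b} (\<lambda>s. p s *\<^sub>R integral {a..s} q) = integral {a..b} (\<lambda>r. integral {r..b} p *\<^sub>R q r)"
proof -
  have pabs: "p absolutely_integrable_on {a..b}"
    using p by (rule absolutely_integrable_continuous_real)
  define g where "g s r = (if r \<le> s then (indicator {a..b} s * p s) *\<^sub>R (indicator {a..b} r *\<^sub>R q r) else 0)"
    for s r
  have gint: "integrable (lebesgue \<Otimes>\<^sub>M lebesgue) (\<lambda>(s, r). g s r)"
    unfolding g_def using integrable_triangle_kernel[OF pabs q] .
  have inner1: "(LINT r|lebesgue. g s r) = (if s \<in> {a..b} then p s *\<^sub>R integral {a..s} q else 0)" for s
  proof (cases "s \<in> {a..b}")
    case True
    have "(LINT r|lebesgue. g s r) = p s *\<^sub>R (LINT r|lebesgue. indicator {a..s} r *\<^sub>R q r)"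
      using True by (subst integral_scaleR_right[symmetric], intro Bochner_Integration.integral_cong)
        (auto simp: g_def indicator_def)
    also have "\<dots> = p s *\<^sub>R integral {a..s} q"
      using True absolutely_integrable_on_subinterval[OF q]
      by (subst lebesgue_integral_indicator_eq_integral) auto
    finally show ?thesis using True by simp
  next
    case False
    then have "g s = (\<lambda>_. 0)"
      by (simp add: g_def fun_eq_iff)
    then show ?thesis using False by auto
  qed
  have inner2: "(LINT s|lebesgue. g s r) = (if r \<in> {a..b} then integral {r..b} p *\<^sub>R q r else 0)" for r
  proof (cases "r \<in> {a..b}")
    case True
    have pr: "p absolutely_integrable_on {r..b}"
      using True by (auto intro: absolutely_integrable_on_subinterval[OF pabs])
    have "(LINT s|lebesgue. g s r) = (LINT s|lebesgue. (indicator {r..b} s *\<^sub>R p s) *\<^sub>R q r)"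
      using True by (intro Bochner_Integration.integral_cong) (auto simp: g_def indicator_def)
    also have "\<dots> = (LINT s|lebesgue. indicator {r..b} s *\<^sub>R p s) *\<^sub>R q r"
      by (rule integral_scaleR_left) (use pr in \<open>simp only: set_integrable_def\<close>)
    also have "(LINT s|lebesgue. indicator {r..b} s *\<^sub>R p s) = integral {r..b} p"
      by (rule lebesgue_integral_indicator_eq_integral[OF pr])
    finally show ?thesis using True by simp
  next
    case False
    then have "(\<lambda>s. g s r) = (\<lambda>_. 0)"
      by (simp add: g_def fun_eq_iff)
    then show ?thesis using False by auto
  qed
  have "integral {a..b} (\<lambda>s. p s *\<^sub>R integral {a..s} q) = integral UNIV (\<lambda>s. LINT r|lebesgue. g s r)"
    unfolding inner1 by (rule integral_restrict_UNIV[symmetric])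
  also have "\<dots> = (LINT s|lebesgue. LINT r|lebesgue. g s r)"
    using has_integral_integral_lebesgue[OF lebesgue_real_pair.integrable_fst[OF gint]]
    by (rule integral_unique)
  also have "\<dots> = (LINT r|lebesgue. LINT s|lebesgue. g s r)"
    using lebesgue_real_pair.Fubini_integral[OF gint] by simp
  also have "\<dots> = integral UNIV (\<lambda>r. LINT s|lebesgue. g s r)"
    using has_integral_integral_lebesgue[OF lebesgue_real_pair.integrable_snd[OF gint]]
    by (rule integral_unique[symmetric])
  also have "\<dots> = integral {a..b} (\<lambda>r. integral {r..b} p *\<^sub>R q r)"
    unfolding inner2 by (rule integral_restrict_UNIV)
  finally show ?thesis .
qed

lemma integral_by_parts_indefinite:
  fixes p P :: "real \<Rightarrow> real" and q :: "real \<Rightarrow> 'a::euclidean_space"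
  assumes q: "q absolutely_integrable_on {a..b}" and p: "continuous_on {a..b} p"
    and P: "\<And>s. s \<in> {a..b} \<Longrightarrow> (P has_real_derivative p s) (at s within {a..b})"
  shows "integral {a..b} (\<lambda>s. p s *\<^sub>R integral {a..s} q)
    = P b *\<^sub>R integral {a..b} q - integral {a..b} (\<lambda>r. P r *\<^sub>R q r)"
proof -
  have "continuous_on {a..b} P"
    using P by (meson DERIV_continuous continuous_at_imp_continuous_on continuous_on_eq_continuous_within)
  then have Pq: "(\<lambda>r. P r *\<^sub>R q r) integrable_on {a..b}"
    using absolutely_integrable_continuous_scaleR[OF _ q] absolutely_integrable_on_def by blast
  have "integral {a..b} (\<lambda>s. p s *\<^sub>R integral {a..s} q) = integral {a..b} (\<lambda>r. integral {r..b} p *\<^sub>R q r)"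
    by (rule integral_triangle_swap[OF p q])
  also have "\<dots> = integral {a..b} (\<lambda>r. P b *\<^sub>R q r - P r *\<^sub>R q r)"
  proof (rule integral_cong)
    fix r assume r: "r \<in> {a..b}"
    have "(p has_integral P b - P r) {r..b}"
    proof (rule fundamental_theorem_of_calculus)
      fix x assume "x \<in> {r..b}"
      with r P[of x] show "(P has_vector_derivative p x) (at x within {r..b})"
        by (auto simp: has_real_derivative_iff_has_vector_derivative
            intro: has_vector_derivative_within_subset)
    qed (use r in auto)
    then show "integral {r..b} p *\<^sub>R q r = P b *\<^sub>R q r - P r *\<^sub>R q r"
      by (simp add: integral_unique scaleR_diff_left)
  qed
  also have "\<dots> = P b *\<^sub>R integral {a..b} q - integral {a..b} (\<lambda>r. P r *\<^sub>R q r)"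
    using q Pq by (subst integral_diff) (auto simp: absolutely_integrable_on_def intro: integrable_cmul)
  finally show ?thesis .
qed

lemma AE_lborel_imp_negligible_exception:
  fixes P :: "'a::euclidean_space \<Rightarrow> bool"
  assumes "AE x in lborel. x \<in> S \<longrightarrow> P x"
  obtains N where "negligible N" "\<And>x. x \<in> S - N \<Longrightarrow> P x"
proof -
  from AE_E[OF assms] obtain N
    where N: "{x \<in> space lborel. \<not> (x \<in> S \<longrightarrow> P x)} \<subseteq> N" "emeasure lborel N = 0" "N \<in> sets lborel" .
  then have "negligible N"
    by (auto simp: negligible_iff_null_sets null_sets_def intro: null_sets_completionI)
  with N(1) that show ?thesis by auto
qed

lemma integral_cong_AE_lborel:
  fixes f g :: "'a::euclidean_space \<Rightarrow> 'b::banach"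
  assumes "AE x in lborel. x \<in> S \<longrightarrow> f x = g x" "T \<subseteq> S"
  shows "integral T f = integral T g"
proof -
  obtain N where "negligible N" "\<And>x. x \<in> S - N \<Longrightarrow> f x = g x"
    using AE_lborel_imp_negligible_exception[OF assms(1)] by blast
  then show ?thesis
    using assms(2) by (intro integral_spike[of N]) auto
qed

lemma absolutely_integrable_cong_AE_lborel:
  fixes f g :: "'a::euclidean_space \<Rightarrow> 'b::euclidean_space"
  assumes "AE x in lborel. x \<in> S \<longrightarrow> f x = g x" "g absolutely_integrable_on S"
  shows "f absolutely_integrable_on S"
proof -
  obtain N where "negligible N" "\<And>x. x \<in> S - N \<Longrightarrow> f x = g x"
    using AE_lborel_imp_negligible_exception[OF assms(1)] by blast
  then show ?thesis
    using absolutely_integrable_spike[OF assms(2)] by auto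
qed

lemma integral_equation_exp_solution:
  fixes d :: "real \<Rightarrow> 'a::banach"
  assumes cont: "continuous_on {a..b} d"
    and eq: "\<And>t. t \<in> {a..b} \<Longrightarrow> d t = d a + m *\<^sub>R integral {a..t} d"
    and t: "t \<in> {a..b}"
  shows "d t = exp (m * (t - a)) *\<^sub>R d a"
proof -
  have d': "(d has_vector_derivative m *\<^sub>R d u) (at u within {a..b})" if u: "u \<in> {a..b}" for u
  proof (rule has_vector_derivative_transform[OF u eq])
    show "((\<lambda>u. d a + m *\<^sub>R integral {a..u} d) has_vector_derivative m *\<^sub>R d u) (at u within {a..b})"
      using has_vector_derivative_add[OF has_vector_derivative_const
          bounded_linear.has_vector_derivative[OF bounded_linear_scaleR_right
            integral_has_vector_derivative[OF cont u]]]
      by simp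
  qed
  define z where "z u = exp (- m * (u - a)) *\<^sub>R d u" for u
  have "(z has_vector_derivative 0) (at u within {a..b})" if u: "u \<in> {a..b}" for u
  proof -
    have "((\<lambda>u. exp (- m * (u - a))) has_field_derivative - m * exp (- m * (u - a))) (at u within {a..b})"
      by (auto intro!: derivative_eq_intros)
    from has_vector_derivative_scaleR[OF this d'[OF u]] show ?thesis
      unfolding z_def by (simp add: scaleR_scaleR mult.commute flip: scaleR_add_left)
  qed
  then obtain C where "\<And>u. u \<in> {a..b} \<Longrightarrow> z u = C"
    using has_vector_derivative_zero_constant[of "{a..b}" z] by auto
  then have "z t = d a"
    using t by (metis atLeastAtMost_iff order_trans order_refl diff_self mult_zero_right exp_zero
        scaleR_one z_def)
  moreover have "d t = exp (m * (t - a)) *\<^sub>R z t"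
    by (simp add: z_def scaleR_scaleR flip: exp_add)
  ultimately show ?thesis by simp
qed

section \<open>Exponential estimates\<close>

lemma has_integral_exp_derivative:
  fixes m :: real
  assumes "a \<le> b"
  shows "((\<lambda>s. m * exp (m * s)) has_integral exp (m * b) - exp (m * a)) {a..b}"
  by (rule fundamental_theorem_of_calculus[OF assms])
    (auto intro!: derivative_eq_intros simp: has_real_derivative_iff_has_vector_derivative[symmetric])

lemma integral_exp_linear:
  fixes \<mu> a b :: real
  assumes "\<mu> \<noteq> 0" "a \<le> b"
  shows "integral {a..b} (\<lambda>s. exp (\<mu> * s)) = (exp (\<mu> * b) - exp (\<mu> * a)) / \<mu>"
proof -
  have "((\<lambda>s. inverse \<mu> * (\<mu> * exp (\<mu> * s))) has_integral inverse \<mu> * (exp (\<mu> * b) - exp (\<mu> * a))) {a..b}"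
    by (intro has_integral_mult_right has_integral_exp_derivative[OF assms(2)])
  moreover have "(\<lambda>s. inverse \<mu> * (\<mu> * exp (\<mu> * s))) = (\<lambda>s. exp (\<mu> * s))"
    using assms(1) by (simp add: fun_eq_iff)
  ultimately show ?thesis
    by (simp add: integral_unique divide_inverse_commute)
qed

lemma exp_bounds_small:
  fixes z :: real
  assumes "\<bar>z\<bar> \<le> 1/5"
  shows "4/5 \<le> exp z" "exp z \<le> 5/4"
proof -
  show "4/5 \<le> exp z"
    using exp_ge_add_one_self[of z] assms by linarith
  have "4/5 \<le> exp (- z)"
    using exp_ge_add_one_self[of "- z"] assms by linarith
  then show "exp z \<le> 5/4"
    by (simp add: exp_minus field_simps)
qed

definition exp_quot :: "real \<Rightarrow> real" where
  "exp_quot x = (exp x - 1) / x"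

lemma exp_quot_pos: "x \<noteq> 0 \<Longrightarrow> 0 < exp_quot x"
  by (cases "0 < x") (auto simp: exp_quot_def divide_pos_pos divide_neg_neg)

lemma exp_quot_le_exp_abs: "exp_quot x \<le> exp \<bar>x\<bar>"
proof (cases x "0 :: real" rule: linorder_cases)
  case less
  have "1 - exp x \<le> - x"
    using exp_ge_add_one_self[of x] by linarith
  then have "exp_quot x \<le> 1"
    using less by (simp add: exp_quot_def divide_le_eq)
  then show ?thesis by (meson less_le_trans one_le_exp_iff abs_ge_zero order_trans)
next
  case greater
  have "exp x * (1 - x) \<le> exp x * exp (- x)"
    using exp_ge_add_one_self[of "- x"] by (intro mult_left_mono) auto
  then have "exp x - 1 \<le> x * exp x"
    by (simp add: exp_minus algebra_simps)
  then show ?thesis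
    using greater by (simp add: exp_quot_def divide_le_eq mult.commute)
qed (simp add: exp_quot_def)

section \<open>The boundary functional and the characteristic function\<close>

text \<open>Phi for functions with values in an arbitrary real normed vector space (it agrees with Phi
  on complex functions, lemma Phi_eq_PhiR), so that the complex resolvent formula and its real
  counterpart used for positivity are a single definition.\<close>

definition PhiR :: "real \<Rightarrow> (real \<Rightarrow> 'a::real_normed_vector) \<Rightarrow> 'a" where
  "PhiR c f = c *\<^sub>R (integral {-2..-1} f - integral {-1..0} f + f (-2) - f 0)"

lemma Phi_eq_PhiR: "Phi c f = PhiR c f"
  by (simp add: Phi_def PhiR_def scaleR_conv_of_real)

lemma PhiR_cong: "(\<And>t. t \<in> {-2..0} \<Longrightarrow> f t = g t) \<Longrightarrow> PhiR c f = PhiR c g"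
proof -
  assume fg: "\<And>t. t \<in> {-2..0} \<Longrightarrow> f t = g t"
  have "integral {a..b} f = integral {a..b} g" if "{a..b} \<subseteq> {-2..0}" for a b
    using fg that by (intro integral_cong) auto
  then show ?thesis
    using fg[of "-2"] fg[of 0] by (simp add: PhiR_def)
qed

lemma PhiR_add:
  fixes f g :: "real \<Rightarrow> 'a::banach"
  assumes "f integrable_on {-2..0}" "g integrable_on {-2..0}"
  shows "PhiR c (\<lambda>t. f t + g t) = PhiR c f + PhiR c g"
proof -
  have "integral {a..b} (\<lambda>t. f t + g t) = integral {a..b} f + integral {a..b} g"
    if "{a..b} \<subseteq> {-2..0}" for a b
    using assms that by (intro integral_add) (auto intro: integrable_on_subinterval)
  then show ?thesis
    by (simp add: PhiR_def algebra_simps)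
qed

lemma PhiR_scaleR_left:
  fixes g :: "real \<Rightarrow> real" and x :: "'a::banach"
  assumes "g integrable_on {-2..0}"
  shows "PhiR c (\<lambda>t. g t *\<^sub>R x) = PhiR c g *\<^sub>R x"
proof -
  have "integral {a..b} (\<lambda>t. g t *\<^sub>R x) = integral {a..b} g *\<^sub>R x" if "{a..b} \<subseteq> {-2..0}" for a b
    using assms that by (intro integral_unique has_integral_scaleR_left integrable_integral)
      (auto intro: integrable_on_subinterval)
  then show ?thesis
    by (simp add: PhiR_def algebra_simps)
qed

lemma PhiR_of_real:
  fixes g :: "real \<Rightarrow> real"
  assumes "g integrable_on {-2..0}"
  shows "PhiR c (\<lambda>t. of_real (g t)) = (of_real (PhiR c g) :: 'a::{real_normed_algebra_1,banach})"
proof -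
  have "integral {a..b} (\<lambda>t. of_real (g t)) = (of_real (integral {a..b} g) :: 'a)"
    if "{a..b} \<subseteq> {-2..0}" for a b
    using assms that by (intro integral_unique has_integral_of_real integrable_integral)
      (auto intro: integrable_on_subinterval)
  then show ?thesis
    by (simp add: PhiR_def scaleR_conv_of_real)
qed

lemma norm_PhiR_le:
  fixes f :: "real \<Rightarrow> 'a::banach"
  assumes f: "continuous_on {-2..0} f" and B: "\<And>t. t \<in> {-2..0} \<Longrightarrow> norm (f t) \<le> B"
  shows "norm (PhiR c f) \<le> 4 * \<bar>c\<bar> * B"
proof -
  have i1: "norm (integral {-2..-1} f) \<le> B" and i2: "norm (integral {-1..0} f) \<le> B"
    using integral_bound[of "-2" "-1" f B] integral_bound[of "-1" 0 f B] B
      continuous_on_subset[OF f] by auto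
  have "norm (integral {-2..-1} f - integral {-1..0} f + f (-2) - f 0)
      \<le> norm (integral {-2..-1} f) + norm (integral {-1..0} f) + norm (f (-2)) + norm (f 0)"
    by (smt (verit) norm_triangle_ineq norm_triangle_ineq4)
  also have "\<dots> \<le> 4 * B"
    using i1 i2 B[of "-2"] B[of 0] by simp
  finally have "norm (integral {-2..-1} f - integral {-1..0} f + f (-2) - f 0) \<le> 4 * B" .
  then have "\<bar>c\<bar> * norm (integral {-2..-1} f - integral {-1..0} f + f (-2) - f 0) \<le> \<bar>c\<bar> * (4 * B)"
    by (rule mult_left_mono) simp
  then show ?thesis
    by (simp add: PhiR_def mult_ac)
qed

definition delta :: "real \<Rightarrow> real \<Rightarrow> real" where
  "delta c \<mu> = \<mu> - PhiR c (\<lambda>t. exp (\<mu> * t))"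

lemma delta_eq:
  assumes "\<mu> \<noteq> 0"
  shows "delta c \<mu> = \<mu> * (1 + c * (exp_quot (- \<mu>))\<^sup>2 + 2 * c * exp_quot (- 2 * \<mu>))"
proof -
  define u where "u = exp (- \<mu>)"
  have e1: "exp (- \<mu>) = u"
    by (simp add: u_def)
  have e2: "exp (- (\<mu> * 2)) = u\<^sup>2"
    by (simp add: u_def power2_eq_square flip: exp_add)
  have i1: "integral {-2..-1} (\<lambda>t. exp (\<mu> * t)) = (u - u\<^sup>2) / \<mu>"
    and i2: "integral {-1..0} (\<lambda>t. exp (\<mu> * t)) = (1 - u) / \<mu>"
    using assms by (simp_all add: integral_exp_linear e1 e2)
  have q1: "exp_quot (- \<mu>) = (1 - u) / \<mu>" and q2: "exp_quot (- 2 * \<mu>) = (1 - u\<^sup>2) / (2 * \<mu>)"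
    using assms by (simp_all add: exp_quot_def e1 e2 field_simps)
  show ?thesis
    using assms unfolding delta_def PhiR_def i1 i2 q1 q2
    by (simp add: e2 field_simps power2_eq_square)
qed

lemma delta_quot_bounds:
  assumes "0 \<le> c" "\<mu> \<noteq> 0" "\<bar>\<mu>\<bar> \<le> 1/10"
  shows "1 \<le> delta c \<mu> / \<mu>" "delta c \<mu> / \<mu> \<le> 1 + 4 * c"
proof -
  have e: "exp (2 * \<bar>\<mu>\<bar>) \<le> 5/4"
    using exp_bounds_small(2)[of "2 * \<bar>\<mu>\<bar>"] assms(3) by simp
  have w1: "0 < exp_quot (- \<mu>)" "(exp_quot (- \<mu>))\<^sup>2 \<le> 5/4"
  proof -
    show "0 < exp_quot (- \<mu>)" using assms(2) by (simp add: exp_quot_pos)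
    then have "(exp_quot (- \<mu>))\<^sup>2 \<le> (exp \<bar>\<mu>\<bar>)\<^sup>2"
      using exp_quot_le_exp_abs[of "- \<mu>"] by (intro power_mono) auto
    also have "\<dots> = exp (2 * \<bar>\<mu>\<bar>)"
      by (simp add: power2_eq_square flip: exp_add)
    finally show "(exp_quot (- \<mu>))\<^sup>2 \<le> 5/4" using e by linarith
  qed
  have w2: "0 < exp_quot (- 2 * \<mu>)" "exp_quot (- 2 * \<mu>) \<le> 5/4"
    using assms(2) exp_quot_pos[of "- 2 * \<mu>"] exp_quot_le_exp_abs[of "- 2 * \<mu>"] e
    by (auto simp: abs_mult)
  have q: "delta c \<mu> / \<mu> = 1 + c * (exp_quot (- \<mu>))\<^sup>2 + 2 * c * exp_quot (- 2 * \<mu>)"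
    using assms(2) by (simp add: delta_eq)
  show "1 \<le> delta c \<mu> / \<mu>"
    unfolding q using assms(1) w1 w2 by simp
  have "c * (exp_quot (- \<mu>))\<^sup>2 \<le> c * (5/4)" "c * exp_quot (- 2 * \<mu>) \<le> c * (5/4)"
    using mult_left_mono[OF w1(2) assms(1)] mult_left_mono[OF w2(2) assms(1)] by auto
  then show "delta c \<mu> / \<mu> \<le> 1 + 4 * c"
    unfolding q using assms(1) by linarith
qed

lemma delta_nonzero: "0 \<le> c \<Longrightarrow> \<mu> \<noteq> 0 \<Longrightarrow> \<bar>\<mu>\<bar> \<le> 1/10 \<Longrightarrow> delta c \<mu> \<noteq> 0"
  using delta_quot_bounds(1)[of c \<mu>] by auto

section \<open>Variation of constants\<close>

definition conv_tail :: "real \<Rightarrow> (real \<Rightarrow> 'a::real_normed_vector) \<Rightarrow> real \<Rightarrow> 'a" where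
  "conv_tail \<mu> k t = integral {t..0} (\<lambda>s. exp (\<mu> * (t - s)) *\<^sub>R k s)"

lemma conv_tail_0 [simp]: "conv_tail \<mu> k 0 = 0"
  by (simp add: conv_tail_def)

lemma conv_tail_factor:
  "conv_tail \<mu> k t = exp (\<mu> * t) *\<^sub>R integral {t..0} (\<lambda>s. exp (- \<mu> * s) *\<^sub>R k s)"
proof -
  have "conv_tail \<mu> k t = integral {t..0} (\<lambda>s. exp (\<mu> * t) *\<^sub>R (exp (- \<mu> * s) *\<^sub>R k s))"
    unfolding conv_tail_def
    by (rule integral_cong) (simp add: scaleR_scaleR right_diff_distrib exp_diff exp_minus divide_inverse)
  then show ?thesis
    by (simp only: integral_cmul)
qed

lemma absolutely_integrable_exp_scaleR:
  fixes k :: "real \<Rightarrow> 'a::euclidean_space"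
  assumes "k absolutely_integrable_on {a..b}"
  shows "(\<lambda>s. exp (m * s) *\<^sub>R k s) absolutely_integrable_on {a..b}"
  by (rule absolutely_integrable_continuous_scaleR[OF _ assms]) (intro continuous_intros)

lemma continuous_on_conv_tail:
  fixes k :: "real \<Rightarrow> 'a::euclidean_space"
  assumes "k absolutely_integrable_on {a..0}"
  shows "continuous_on {a..0} (conv_tail \<mu> k)"
proof -
  have "(\<lambda>s. exp (- \<mu> * s) *\<^sub>R k s) integrable_on {a..0}"
    using absolutely_integrable_exp_scaleR[OF assms] absolutely_integrable_on_def by blast
  moreover have "conv_tail \<mu> k = (\<lambda>t. exp (\<mu> * t) *\<^sub>R integral {t..0} (\<lambda>s. exp (- \<mu> * s) *\<^sub>R k s))"
    by (simp add: fun_eq_iff conv_tail_factor)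
  ultimately show ?thesis
    by (auto intro!: continuous_intros indefinite_integral_continuous_1')
qed

lemma conv_tail_eq_integral_diff:
  fixes \<mu> :: real and k :: "real \<Rightarrow> 'a::euclidean_space"
  assumes k: "k absolutely_integrable_on {a..0}" and t: "t \<in> {a..0}"
  defines "q \<equiv> \<lambda>s. exp (- \<mu> * s) *\<^sub>R k s"
  shows "conv_tail \<mu> k t = exp (\<mu> * t) *\<^sub>R (integral {a..0} q - integral {a..t} q)"
proof -
  have "q integrable_on {a..0}"
    using absolutely_integrable_exp_scaleR[OF k, of "- \<mu>"] unfolding q_def absolutely_integrable_on_def by blast
  then have "integral {t..0} q = integral {a..0} q - integral {a..t} q"
    using Henstock_Kurzweil_Integration.integral_combine[where a=a and c=t and b=0 and f=q] t
    by (simp add: algebra_simps)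
  then show ?thesis
    unfolding conv_tail_factor q_def[symmetric] by simp
qed

lemma conv_tail_integral_eq:
  fixes k :: "real \<Rightarrow> 'a::euclidean_space"
  assumes k: "k absolutely_integrable_on {a..0}" and t: "t \<in> {a..0}"
  shows "conv_tail \<mu> k t = conv_tail \<mu> k a + integral {a..t} (\<lambda>s. \<mu> *\<^sub>R conv_tail \<mu> k s - k s)"
proof -
  define q where "q = (\<lambda>s. exp (- \<mu> * s) *\<^sub>R k s)"
  define Q where "Q s = integral {a..s} q" for s
  have sub: "{a..t} \<subseteq> {a..0}" using t by auto
  have qa: "q absolutely_integrable_on {a..0}"
    unfolding q_def by (rule absolutely_integrable_exp_scaleR[OF k])
  have F: "conv_tail \<mu> k s = exp (\<mu> * s) *\<^sub>R (Q 0 - Q s)" if "s \<in> {a..0}" for s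
    using conv_tail_eq_integral_diff[OF k that] by (simp add: Q_def q_def)
  have Qc: "continuous_on {a..t} Q"
    using qa sub unfolding Q_def
    by (intro indefinite_integral_continuous_1) (auto simp: absolutely_integrable_on_def intro: integrable_on_subinterval)
  have ki: "k integrable_on {a..t}"
    using absolutely_integrable_on_subinterval[OF k sub] by (simp add: absolutely_integrable_on_def)
  have e: "((\<lambda>s. (\<mu> * exp (\<mu> * s)) *\<^sub>R Q 0) has_integral (exp (\<mu> * t) - exp (\<mu> * a)) *\<^sub>R Q 0) {a..t}"
    using t by (intro has_integral_scaleR_left has_integral_exp_derivative) auto
  have "integral {a..t} (\<lambda>s. (\<mu> * exp (\<mu> * s)) *\<^sub>R Q s)
      = exp (\<mu> * t) *\<^sub>R Q t - integral {a..t} (\<lambda>r. exp (\<mu> * r) *\<^sub>R q r)"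
    unfolding Q_def
    by (rule integral_by_parts_indefinite[OF absolutely_integrable_on_subinterval[OF qa sub]])
      (auto intro!: continuous_intros derivative_eq_intros)
  moreover have "(\<lambda>r. exp (\<mu> * r) *\<^sub>R q r) = k"
    by (simp add: fun_eq_iff q_def scaleR_scaleR flip: exp_add)
  ultimately have parts: "integral {a..t} (\<lambda>s. (\<mu> * exp (\<mu> * s)) *\<^sub>R Q s)
      = exp (\<mu> * t) *\<^sub>R Q t - integral {a..t} k"
    by simp
  have "integral {a..t} (\<lambda>s. \<mu> *\<^sub>R conv_tail \<mu> k s - k s)
      = integral {a..t} (\<lambda>s. (\<mu> * exp (\<mu> * s)) *\<^sub>R Q 0 - (\<mu> * exp (\<mu> * s)) *\<^sub>R Q s - k s)"
    using sub by (intro integral_cong) (auto simp: F scaleR_diff_right)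
  also have "\<dots> = (exp (\<mu> * t) - exp (\<mu> * a)) *\<^sub>R Q 0
      - integral {a..t} (\<lambda>s. (\<mu> * exp (\<mu> * s)) *\<^sub>R Q s) - integral {a..t} k"
    using e ki Qc
    by (simp add: integral_diff integrable_diff integral_unique has_integral_integrable
        integrable_continuous_interval continuous_intros)
  also have "\<dots> = conv_tail \<mu> k t - conv_tail \<mu> k a"
  proof -
    have "conv_tail \<mu> k a = exp (\<mu> * a) *\<^sub>R Q 0"
      using F[of a] t by (simp add: Q_def)
    then show ?thesis
      unfolding parts F[OF t] by (simp add: algebra_simps)
  qed
  finally show ?thesis
    by simp
qed

lemma norm_conv_tail_le:
  fixes k :: "real \<Rightarrow> 'a::euclidean_space"
  assumes k: "k absolutely_integrable_on {-2..0}" and t: "t \<in> {-2..0}"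
  shows "norm (conv_tail \<mu> k t) \<le> exp (2 * \<bar>\<mu>\<bar>) * integral {-2..0} (\<lambda>s. norm (k s))"
proof -
  have sub: "{t..0} \<subseteq> {-2..0}" using t by auto
  have nk: "(\<lambda>s. norm (k s)) integrable_on {-2..0}"
    using k by (simp add: absolutely_integrable_on_def)
  have e: "exp (\<mu> * (t - s)) \<le> exp (2 * \<bar>\<mu>\<bar>)" if "s \<in> {t..0}" for s
  proof -
    have "\<mu> * (t - s) \<le> \<bar>\<mu>\<bar> * \<bar>t - s\<bar>" by (metis abs_ge_self abs_mult)
    also have "\<dots> \<le> \<bar>\<mu>\<bar> * 2" using that t by (intro mult_left_mono) auto
    finally show ?thesis by simp
  qed
  have "norm (conv_tail \<mu> k t) \<le> integral {t..0} (\<lambda>s. exp (2 * \<bar>\<mu>\<bar>) * norm (k s))"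
    unfolding conv_tail_def
  proof (rule integral_norm_bound_integral)
    have "(\<lambda>s. exp (\<mu> * (t - s)) *\<^sub>R k s) absolutely_integrable_on {t..0}"
      by (rule absolutely_integrable_continuous_scaleR[OF _ absolutely_integrable_on_subinterval[OF k sub]])
        (intro continuous_intros)
    then show "(\<lambda>s. exp (\<mu> * (t - s)) *\<^sub>R k s) integrable_on {t..0}"
      by (simp add: absolutely_integrable_on_def)
    show "(\<lambda>s. exp (2 * \<bar>\<mu>\<bar>) * norm (k s)) integrable_on {t..0}"
      using nk sub by (auto intro: integrable_on_subinterval)
  qed (use e in \<open>auto intro: mult_right_mono\<close>)
  also have "\<dots> \<le> integral {-2..0} (\<lambda>s. exp (2 * \<bar>\<mu>\<bar>) * norm (k s))"
    using nk sub by (intro integral_subset_le) (auto intro: integrable_on_subinterval)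
  finally show ?thesis
    by simp
qed

definition var_const :: "real \<Rightarrow> 'a \<Rightarrow> (real \<Rightarrow> 'a::real_normed_vector) \<Rightarrow> real \<Rightarrow> 'a" where
  "var_const \<mu> x k t = exp (\<mu> * t) *\<^sub>R x + conv_tail \<mu> k t"

lemma var_const_0 [simp]: "var_const \<mu> x k 0 = x"
  by (simp add: var_const_def)

lemma continuous_on_var_const:
  fixes k :: "real \<Rightarrow> 'a::euclidean_space"
  assumes "k absolutely_integrable_on {a..0}"
  shows "continuous_on {a..0} (var_const \<mu> x k)"
  unfolding var_const_def[abs_def]
  by (intro continuous_intros continuous_on_conv_tail[OF assms])

lemma var_const_integral_eq:
  fixes k :: "real \<Rightarrow> 'a::euclidean_space"
  assumes k: "k absolutely_integrable_on {a..0}" and t: "t \<in> {a..0}"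
  shows "var_const \<mu> x k t = var_const \<mu> x k a + integral {a..t} (\<lambda>s. \<mu> *\<^sub>R var_const \<mu> x k s - k s)"
proof -
  have sub: "{a..t} \<subseteq> {a..0}" using t by auto
  have e: "((\<lambda>s. (\<mu> * exp (\<mu> * s)) *\<^sub>R x) has_integral (exp (\<mu> * t) - exp (\<mu> * a)) *\<^sub>R x) {a..t}"
    using t by (intro has_integral_scaleR_left has_integral_exp_derivative) auto
  have "(\<lambda>s. \<mu> *\<^sub>R conv_tail \<mu> k s) integrable_on {a..t}"
    by (intro integrable_cmul integrable_continuous_interval
        continuous_on_subset[OF continuous_on_conv_tail[OF k] sub])
  moreover have "k integrable_on {a..t}"
    using absolutely_integrable_on_subinterval[OF k sub] by (simp add: absolutely_integrable_on_def)
  ultimately have "(\<lambda>s. \<mu> *\<^sub>R conv_tail \<mu> k s - k s) integrable_on {a..t}"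
    by (rule integrable_diff)
  note Fi = this
  have "integral {a..t} (\<lambda>s. \<mu> *\<^sub>R var_const \<mu> x k s - k s)
      = integral {a..t} (\<lambda>s. (\<mu> * exp (\<mu> * s)) *\<^sub>R x + (\<mu> *\<^sub>R conv_tail \<mu> k s - k s))"
    by (rule integral_cong) (simp add: var_const_def scaleR_add_right add_diff_eq)
  also have "\<dots> = (exp (\<mu> * t) - exp (\<mu> * a)) *\<^sub>R x + integral {a..t} (\<lambda>s. \<mu> *\<^sub>R conv_tail \<mu> k s - k s)"
    by (rule integral_unique[OF has_integral_add[OF e integrable_integral[OF Fi]]])
  finally have "integral {a..t} (\<lambda>s. \<mu> *\<^sub>R var_const \<mu> x k s - k s)
      = (exp (\<mu> * t) - exp (\<mu> * a)) *\<^sub>R x + integral {a..t} (\<lambda>s. \<mu> *\<^sub>R conv_tail \<mu> k s - k s)" .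
  then show ?thesis
    using conv_tail_integral_eq[OF k t, of \<mu>] by (simp add: var_const_def algebra_simps)
qed

lemma eq_var_const_if_integral_eq:
  fixes f k :: "real \<Rightarrow> 'a::euclidean_space"
  assumes k: "k absolutely_integrable_on {a..0}" and f: "continuous_on {a..0} f"
    and eq: "\<And>t. t \<in> {a..0} \<Longrightarrow> f t = f a + integral {a..t} (\<lambda>s. \<mu> *\<^sub>R f s - k s)"
    and t: "t \<in> {a..0}"
  shows "f t = var_const \<mu> (f 0) k t"
proof -
  define g where "g = var_const \<mu> (f 0) k"
  define d where "d s = f s - g s" for s
  have g: "continuous_on {a..0} g"
    unfolding g_def by (rule continuous_on_var_const[OF k])
  have d: "continuous_on {a..0} d"
    unfolding d_def using f g by (intro continuous_intros)
  have "d s = d a + \<mu> *\<^sub>R integral {a..s} d" if s: "s \<in> {a..0}" for s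
  proof -
    have sub: "{a..s} \<subseteq> {a..0}" using s by auto
    have ki: "k integrable_on {a..s}"
      using absolutely_integrable_on_subinterval[OF k sub] by (simp add: absolutely_integrable_on_def)
    have fi: "f integrable_on {a..s}" "g integrable_on {a..s}"
      using continuous_on_subset[OF f sub] continuous_on_subset[OF g sub]
      by (auto intro: integrable_continuous_interval)
    have "integral {a..s} (\<lambda>r. \<mu> *\<^sub>R f r - k r) - integral {a..s} (\<lambda>r. \<mu> *\<^sub>R g r - k r)
        = \<mu> *\<^sub>R integral {a..s} d"
      using ki fi by (simp add: d_def[abs_def] integral_diff integrable_diff integrable_cmul scaleR_diff_right)
    then show ?thesis
      using eq[OF s] var_const_integral_eq[OF k s, of \<mu> "f 0"] by (simp add: d_def g_def algebra_simps)
  qed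
  then have dt: "d r = exp (\<mu> * (r - a)) *\<^sub>R d a" if "r \<in> {a..0}" for r
    using integral_equation_exp_solution[OF d] that by blast
  have "d 0 = 0"
    by (simp add: d_def g_def)
  then have "d a = 0"
    using dt[of 0] t by auto
  then show ?thesis
    using dt[OF t] by (simp add: d_def g_def)
qed

lemma PhiR_var_const:
  fixes k :: "real \<Rightarrow> 'a::euclidean_space"
  assumes "k absolutely_integrable_on {-2..0}"
  shows "PhiR c (var_const \<mu> x k) = PhiR c (\<lambda>t. exp (\<mu> * t)) *\<^sub>R x + PhiR c (conv_tail \<mu> k)"
proof -
  have "PhiR c (var_const \<mu> x k) = PhiR c (\<lambda>t. exp (\<mu> * t) *\<^sub>R x) + PhiR c (conv_tail \<mu> k)"
    unfolding var_const_def[abs_def] using continuous_on_conv_tail[OF assms]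
    by (intro PhiR_add integrable_continuous_interval continuous_intros)
  then show ?thesis
    by (simp add: PhiR_scaleR_left integrable_continuous_interval continuous_intros)
qed

section \<open>The resolvent\<close>

text \<open>res_elt c \<mu> h is the explicit R(\<mu>, A) h; its first component res_val is fixed by the
  boundary condition (lemma boundary_eq_iff_res_val).\<close>

definition res_val :: "real \<Rightarrow> real \<Rightarrow> 'a \<Rightarrow> (real \<Rightarrow> 'a::real_normed_vector) \<Rightarrow> 'a" where
  "res_val c \<mu> y k = (y + PhiR c (conv_tail \<mu> k)) /\<^sub>R delta c \<mu>"

definition res_elt :: "real \<Rightarrow> real \<Rightarrow> elt \<Rightarrow> elt" where
  "res_elt c \<mu> h = (res_val c \<mu> (fst h) (snd h), var_const \<mu> (res_val c \<mu> (fst h) (snd h)) (snd h))"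

lemma boundary_eq_iff_res_val:
  fixes k :: "real \<Rightarrow> 'a::euclidean_space"
  assumes "delta c \<mu> \<noteq> 0" "k absolutely_integrable_on {-2..0}"
  shows "\<mu> *\<^sub>R x - PhiR c (var_const \<mu> x k) = y \<longleftrightarrow> x = res_val c \<mu> y k"
proof -
  have "\<mu> *\<^sub>R x - PhiR c (var_const \<mu> x k) = delta c \<mu> *\<^sub>R x - PhiR c (conv_tail \<mu> k)"
    by (simp add: PhiR_var_const[OF assms(2)] delta_def scaleR_diff_left)
  then show ?thesis
    using assms(1) by (auto simp: res_val_def)
qed

lemma eqE_refl: "eqE v v"
  by (simp add: eqE_def)

lemma eqE_sym: "eqE v w \<Longrightarrow> eqE w v"
  unfolding eqE_def by (auto elim: eventually_mono)

lemma eqE_trans: "eqE u v \<Longrightarrow> eqE v w \<Longrightarrow> eqE u w"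
  unfolding eqE_def by (auto elim: eventually_mono dest: AE_conjI)

lemma normE_cong: "eqE v w \<Longrightarrow> normE v = normE w"
  unfolding eqE_def normE_def
  by (auto intro!: integral_cong_AE_lborel[where S="{-2..0}"] elim: eventually_mono)

lemma A_graph_var_const:
  fixes \<mu> :: real and x :: complex and k :: "real \<Rightarrow> complex"
  assumes k: "k absolutely_integrable_on {-2..0}"
  defines "f \<equiv> var_const \<mu> x k"
  shows "A_graph c (x, f) (Phi c f, \<lambda>t. of_real \<mu> * f t - k t)"
proof -
  have fc: "continuous_on {-2..0} f"
    unfolding f_def by (rule continuous_on_var_const[OF k])
  have "W11_rep f (\<lambda>t. of_real \<mu> * f t - k t)"
    unfolding W11_rep_def
  proof
    have "(\<lambda>t. of_real \<mu> * f t) absolutely_integrable_on {-2..0}"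
      using fc by (intro absolutely_integrable_continuous_real continuous_intros)
    then show "(\<lambda>t. of_real \<mu> * f t - k t) absolutely_integrable_on {-2..0}"
      using k by (rule set_integral_diff(1))
    show "\<forall>t\<in>{-2..0}. f t = f (-2) + integral {-2..t} (\<lambda>t. of_real \<mu> * f t - k t)"
    proof
      fix t :: real assume "t \<in> {-2..0}"
      from var_const_integral_eq[OF k this, of \<mu> x]
      show "f t = f (-2) + integral {-2..t} (\<lambda>t. of_real \<mu> * f t - k t)"
        by (simp only: f_def scaleR_conv_of_real)
    qed
  qed
  moreover have "eqE (x, f) (f 0, f)"
    by (simp add: f_def eqE_refl)
  ultimately show ?thesis
    unfolding A_graph_def inE_def snd_conv
    using absolutely_integrable_continuous_real[OF fc] by (blast intro: eqE_refl)
qed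

lemma A_graph_res_elt:
  assumes "delta c \<mu> \<noteq> 0" "inE h"
  obtains w where "A_graph c (res_elt c \<mu> h) w" "diffE (scaleE (of_real \<mu>) (res_elt c \<mu> h)) w = h"
proof -
  define x where "x = res_val c \<mu> (fst h) (snd h)"
  have k: "snd h absolutely_integrable_on {-2..0}"
    using assms(2) by (simp add: inE_def)
  let ?f = "var_const \<mu> x (snd h)"
  have bd: "\<mu> *\<^sub>R x - PhiR c ?f = fst h"
    using boundary_eq_iff_res_val[OF assms(1) k] by (simp add: x_def)
  show ?thesis
  proof (rule that)
    show "A_graph c (res_elt c \<mu> h) (Phi c ?f, \<lambda>t. of_real \<mu> * ?f t - snd h t)"
      unfolding res_elt_def x_def[symmetric] by (rule A_graph_var_const[OF k])
    show "diffE (scaleE (of_real \<mu>) (res_elt c \<mu> h)) (Phi c ?f, \<lambda>t. of_real \<mu> * ?f t - snd h t) = h"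
      using bd by (simp add: res_elt_def x_def[symmetric] diffE_def scaleE_def Phi_eq_PhiR
          scaleR_conv_of_real prod_eq_iff)
  qed
qed

lemma continuous_on_W11_rep:
  assumes "W11_rep f g"
  shows "continuous_on {-2..0} f"
proof -
  have "continuous_on {-2..0} (\<lambda>t. f (-2) + integral {-2..t} g)"
    using assms by (intro continuous_intros indefinite_integral_continuous_1)
      (simp add: W11_rep_def absolutely_integrable_on_def)
  then show ?thesis
    by (rule continuous_on_eq) (metis assms W11_rep_def)
qed

lemma A_graph_solution_var_const:
  assumes G: "A_graph c v w" and E: "eqE (diffE (scaleE (of_real \<mu>) v) w) h"
    and k: "snd h absolutely_integrable_on {-2..0}"
  shows "eqE v (fst v, var_const \<mu> (fst v) (snd h))"
    and "\<mu> *\<^sub>R fst v - PhiR c (var_const \<mu> (fst v) (snd h)) = fst h"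
proof -
  obtain f g where W: "W11_rep f g" and ev: "eqE v (f 0, f)" and ew: "eqE w (Phi c f, g)"
    using G unfolding A_graph_def by blast
  have f_eq: "\<And>t. t \<in> {-2..0} \<Longrightarrow> f t = f (-2) + integral {-2..t} g"
    using W unfolding W11_rep_def by blast
  have fc: "continuous_on {-2..0} f"
    using W by (rule continuous_on_W11_rep)
  have "AE s in lborel. (s \<in> {-2..0} \<longrightarrow> of_real \<mu> * snd v s - snd w s = snd h s) \<and>
      (s \<in> {-2..0} \<longrightarrow> snd v s = f s) \<and> (s \<in> {-2..0} \<longrightarrow> snd w s = g s)"
    using E ev ew unfolding eqE_def diffE_def scaleE_def by (simp add: AE_conjI)
  then have AEg: "AE s in lborel. s \<in> {-2..0} \<longrightarrow> g s = \<mu> *\<^sub>R f s - snd h s"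
    by (rule eventually_mono) (auto simp: scaleR_conv_of_real eq_diff_eq diff_eq_eq)
  have f_int: "f t = f (-2) + integral {-2..t} (\<lambda>s. \<mu> *\<^sub>R f s - snd h s)" if "t \<in> {-2..0}" for t
  proof -
    have "integral {-2..t} g = integral {-2..t} (\<lambda>s. \<mu> *\<^sub>R f s - snd h s)"
      by (rule integral_cong_AE_lborel[OF AEg]) (use that in auto)
    then show ?thesis
      using f_eq[OF that] by simp
  qed
  have v0: "fst v = f 0"
    using ev by (simp add: eqE_def)
  have f_var: "f t = var_const \<mu> (fst v) (snd h) t" if "t \<in> {-2..0}" for t
    using eq_var_const_if_integral_eq[OF k fc f_int that] unfolding v0 .
  have "AE s in lborel. s \<in> {-2..0} \<longrightarrow> snd v s = f s"
    using ev by (simp add: eqE_def)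
  then have "AE s in lborel. s \<in> {-2..0} \<longrightarrow> snd v s = var_const \<mu> (fst v) (snd h) s"
    by (rule eventually_mono) (simp add: f_var)
  then show "eqE v (fst v, var_const \<mu> (fst v) (snd h))"
    by (simp add: eqE_def)
  have "of_real \<mu> * fst v - fst w = fst h" "fst w = Phi c f"
    using E ew by (simp_all add: eqE_def diffE_def scaleE_def)
  moreover have "PhiR c f = PhiR c (var_const \<mu> (fst v) (snd h))"
    using f_var by (rule PhiR_cong)
  ultimately show "\<mu> *\<^sub>R fst v - PhiR c (var_const \<mu> (fst v) (snd h)) = fst h"
    by (simp add: Phi_eq_PhiR scaleR_conv_of_real)
qed

lemma eqE_res_elt_if_A_graph:
  assumes "delta c \<mu> \<noteq> 0" "inE h" "A_graph c v w" "eqE (diffE (scaleE (of_real \<mu>) v) w) h"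
  shows "eqE v (res_elt c \<mu> h)"
proof -
  have k: "snd h absolutely_integrable_on {-2..0}"
    using assms(2) by (simp add: inE_def)
  have "fst v = res_val c \<mu> (fst h) (snd h)"
    using A_graph_solution_var_const(2)[OF assms(3,4) k] boundary_eq_iff_res_val[OF assms(1) k] by blast
  then show ?thesis
    using A_graph_solution_var_const(1)[OF assms(3,4) k] by (simp add: res_elt_def)
qed

lemma norm_var_const_le:
  fixes k :: "real \<Rightarrow> 'a::euclidean_space"
  assumes k: "k absolutely_integrable_on {-2..0}" and t: "t \<in> {-2..0}"
  shows "norm (var_const \<mu> x k t) \<le> exp (2 * \<bar>\<mu>\<bar>) * (norm x + integral {-2..0} (\<lambda>s. norm (k s)))"
proof -
  have "\<mu> * t \<le> \<bar>\<mu>\<bar> * \<bar>t\<bar>" by (metis abs_ge_self abs_mult)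
  also have "\<dots> \<le> \<bar>\<mu>\<bar> * 2" using t by (intro mult_left_mono) auto
  finally have "exp (\<mu> * t) * norm x \<le> exp (2 * \<bar>\<mu>\<bar>) * norm x"
    by (intro mult_right_mono) (auto simp: mult.commute)
  then show ?thesis
    using norm_conv_tail_le[OF k t, of \<mu>] norm_triangle_ineq[of "exp (\<mu> * t) *\<^sub>R x" "conv_tail \<mu> k t"]
    by (simp add: var_const_def distrib_left)
qed

lemma norm_res_val_le:
  fixes k :: "real \<Rightarrow> 'a::euclidean_space"
  assumes k: "k absolutely_integrable_on {-2..0}"
  shows "norm (res_val c \<mu> y k)
    \<le> (norm y + 4 * \<bar>c\<bar> * exp (2 * \<bar>\<mu>\<bar>) * integral {-2..0} (\<lambda>s. norm (k s))) / \<bar>delta c \<mu>\<bar>"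
proof -
  have "norm (PhiR c (conv_tail \<mu> k)) \<le> 4 * \<bar>c\<bar> * (exp (2 * \<bar>\<mu>\<bar>) * integral {-2..0} (\<lambda>s. norm (k s)))"
    by (rule norm_PhiR_le[OF continuous_on_conv_tail[OF k] norm_conv_tail_le[OF k]])
  then have "norm (y + PhiR c (conv_tail \<mu> k))
      \<le> norm y + 4 * \<bar>c\<bar> * exp (2 * \<bar>\<mu>\<bar>) * integral {-2..0} (\<lambda>s. norm (k s))"
    using norm_triangle_ineq[of y "PhiR c (conv_tail \<mu> k)"] by (simp add: mult.assoc)
  moreover have "norm (res_val c \<mu> y k) = norm (y + PhiR c (conv_tail \<mu> k)) / \<bar>delta c \<mu>\<bar>"
    by (simp add: res_val_def divide_inverse_commute)
  ultimately show ?thesis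
    by (simp add: divide_right_mono)
qed

lemma normE_var_const_le:
  fixes \<mu> :: real and x :: complex and h :: elt
  assumes k: "snd h absolutely_integrable_on {-2..0}"
  defines "K \<equiv> exp (2 * \<bar>\<mu>\<bar>)" and "N \<equiv> integral {-2..0} (\<lambda>s. norm (snd h s))"
  shows "normE (x, var_const \<mu> x (snd h)) \<le> (1 + 2 * K) * norm x + 2 * K * N"
proof -
  have "norm (integral {-2..0} (\<lambda>t. norm (var_const \<mu> x (snd h) t))) \<le> K * (norm x + N) * (0 - -2)"
    by (rule integral_bound)
      (use norm_var_const_le[OF k] in \<open>auto simp: K_def N_def intro: continuous_on_norm continuous_on_var_const[OF k]\<close>)
  then have "integral {-2..0} (\<lambda>t. norm (var_const \<mu> x (snd h) t)) \<le> 2 * K * (norm x + N)"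
    by (simp add: abs_le_iff)
  then show ?thesis
    by (simp add: normE_def algebra_simps)
qed

lemma normE_res_elt_le:
  assumes "delta c \<mu> \<noteq> 0"
  obtains M where "\<And>h. inE h \<Longrightarrow> normE (res_elt c \<mu> h) \<le> M * normE h"
proof -
  define K where "K = exp (2 * \<bar>\<mu>\<bar>)"
  define A where "A = 1 / \<bar>delta c \<mu>\<bar>"
  define B where "B = 4 * \<bar>c\<bar> * K"
  define M where "M = (1 + 2 * K) * A * (1 + B) + 2 * K"
  have pos: "0 < K" "0 \<le> A" "0 \<le> B"
    by (auto simp: K_def A_def B_def)
  have "normE (res_elt c \<mu> h) \<le> M * normE h" if h: "inE h" for h
  proof -
    define x where "x = res_val c \<mu> (fst h) (snd h)"
    define N where "N = integral {-2..0} (\<lambda>s. norm (snd h s))"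
    have k: "snd h absolutely_integrable_on {-2..0}"
      using h by (simp add: inE_def)
    have N: "0 \<le> N"
      using k by (auto simp: N_def absolutely_integrable_on_def intro: integral_nonneg)
    have x: "norm x \<le> A * (norm (fst h) + B * N)"
      using norm_res_val_le[OF k, of c \<mu> "fst h"] by (simp add: x_def A_def B_def K_def N_def mult.assoc)
    have "normE (res_elt c \<mu> h) \<le> (1 + 2 * K) * norm x + 2 * K * N"
      using normE_var_const_le[OF k, where \<mu>=\<mu> and x=x] by (simp add: res_elt_def x_def[symmetric] K_def N_def)
    also have "\<dots> \<le> (1 + 2 * K) * (A * (norm (fst h) + B * N)) + 2 * K * N"
      using x pos by (intro add_right_mono mult_left_mono) auto
    also have "\<dots> \<le> M * normE h"
    proof -
      have "M * (norm (fst h) + N) - ((1 + 2 * K) * (A * (norm (fst h) + B * N)) + 2 * K * N)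
          = (1 + 2 * K) * A * B * norm (fst h) + (1 + 2 * K) * A * N + 2 * K * norm (fst h)"
        by (simp add: M_def algebra_simps)
      moreover have "0 \<le> (1 + 2 * K) * A * B * norm (fst h) + (1 + 2 * K) * A * N + 2 * K * norm (fst h)"
        using pos N by simp
      ultimately show ?thesis
        by (simp add: normE_def N_def)
    qed
    finally show ?thesis .
  qed
  then show ?thesis
    using that by blast
qed

lemma inE_diffE_A_graph:
  assumes "A_graph c v w"
  shows "inE (diffE (scaleE a v) w)"
proof -
  obtain f g where "W11_rep f g" "eqE w (Phi c f, g)"
    using assms unfolding A_graph_def by blast
  then have "AE s in lborel. s \<in> {-2..0} \<longrightarrow> snd w s = g s" "g absolutely_integrable_on {-2..0}"
    unfolding W11_rep_def eqE_def by auto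
  then have "snd w absolutely_integrable_on {-2..0}"
    by (rule absolutely_integrable_cong_AE_lborel)
  moreover have "snd v absolutely_integrable_on {-2..0}"
    using assms by (simp add: A_graph_def inE_def)
  ultimately show ?thesis
    by (simp add: inE_def diffE_def scaleE_def set_integral_diff(1))
qed

lemma res_elt_zero: "res_elt c \<mu> (0, \<lambda>_. 0) = (0, \<lambda>_. 0)"
proof -
  have ct: "conv_tail \<mu> (\<lambda>_. 0) = (\<lambda>_. 0 :: complex)"
    unfolding conv_tail_def by simp
  show ?thesis
    unfolding res_elt_def fst_conv snd_conv res_val_def ct by (simp add: var_const_def PhiR_def fun_eq_iff ct)
qed

lemma in_resolvent_set_if_delta_nonzero:
  assumes \<delta>: "delta c \<mu> \<noteq> 0"
  shows "in_resolvent_set c (of_real \<mu>)"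
  unfolding in_resolvent_set_def
proof (intro conjI allI impI)
  fix h assume "inE h"
  then obtain w where "A_graph c (res_elt c \<mu> h) w" "diffE (scaleE (of_real \<mu>) (res_elt c \<mu> h)) w = h"
    using A_graph_res_elt[OF \<delta>] by blast
  then show "\<exists>v w. A_graph c v w \<and> eqE (diffE (scaleE (of_real \<mu>) v) w) h"
    by (metis eqE_refl)
next
  fix v w assume vw: "A_graph c v w \<and> eqE (diffE (scaleE (of_real \<mu>) v) w) (0, \<lambda>_. 0)"
  have "inE (0, \<lambda>_. 0)"
    by (simp add: inE_def)
  with vw show "eqE v (0, \<lambda>_. 0)"
    using eqE_res_elt_if_A_graph[OF \<delta>] res_elt_zero by metis
next
  obtain M where M: "\<And>h. inE h \<Longrightarrow> normE (res_elt c \<mu> h) \<le> M * normE h"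
    using normE_res_elt_le[OF \<delta>] by blast
  have "normE v \<le> M * normE (diffE (scaleE (of_real \<mu>) v) w)" if "A_graph c v w" for v w
    using normE_cong[OF eqE_res_elt_if_A_graph[OF \<delta> inE_diffE_A_graph[OF that] that eqE_refl]]
      M[OF inE_diffE_A_graph[OF that]] by simp
  then show "\<exists>M. \<forall>v w. A_graph c v w \<longrightarrow> normE v \<le> M * normE (diffE (scaleE (of_real \<mu>) v) w)"
    by blast
qed

lemma eqE_resolvent_res_elt:
  assumes \<delta>: "delta c \<mu> \<noteq> 0" and h: "inE h" and hh': "eqE h h'"
  shows "eqE (resolvent c (of_real \<mu>) h) (res_elt c \<mu> h')"
proof -
  have "AE s in lborel. s \<in> {-2..0} \<longrightarrow> snd h' s = snd h s"
    using eqE_sym[OF hh'] by (simp add: eqE_def)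
  then have h': "inE h'"
    using h unfolding inE_def by (rule absolutely_integrable_cong_AE_lborel)
  obtain w where "A_graph c (res_elt c \<mu> h) w" "diffE (scaleE (of_real \<mu>) (res_elt c \<mu> h)) w = h"
    using A_graph_res_elt[OF \<delta> h] by blast
  then have "\<exists>v w. A_graph c v w \<and> eqE (diffE (scaleE (of_real \<mu>) v) w) h"
    by (metis eqE_refl)
  then obtain w where "A_graph c (resolvent c (of_real \<mu>) h) w"
    and "eqE (diffE (scaleE (of_real \<mu>) (resolvent c (of_real \<mu>) h)) w) h"
    unfolding resolvent_def by (metis (mono_tags, lifting) someI_ex)
  then show ?thesis
    using eqE_res_elt_if_A_graph[OF \<delta> h'] eqE_trans[OF _ hh'] by blast
qed

section \<open>Positivity\<close>

lemma conv_tail_of_real: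
  fixes k :: "real \<Rightarrow> real"
  assumes k: "k absolutely_integrable_on {-2..0}" and t: "t \<in> {-2..0}"
  shows "conv_tail \<mu> (\<lambda>s. of_real (k s)) t = (of_real (conv_tail \<mu> k t) :: 'a::{real_normed_algebra_1,banach})"
proof -
  have sub: "{t..0} \<subseteq> {-2..0}"
    using t by auto
  have "(\<lambda>s. exp (\<mu> * (t - s)) *\<^sub>R k s) absolutely_integrable_on {t..0}"
    by (rule absolutely_integrable_continuous_scaleR[OF _ absolutely_integrable_on_subinterval[OF k sub]])
      (intro continuous_intros)
  then have "(\<lambda>s. exp (\<mu> * (t - s)) * k s) integrable_on {t..0}"
    by (simp add: absolutely_integrable_on_def)
  then show ?thesis
    unfolding conv_tail_def
    by (simp add: scaleR_conv_of_real integral_unique[OF has_integral_of_real[OF integrable_integral]]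
        flip: of_real_mult)
qed

lemma var_const_of_real:
  fixes k :: "real \<Rightarrow> real"
  assumes "k absolutely_integrable_on {-2..0}" "t \<in> {-2..0}"
  shows "var_const \<mu> (of_real x) (\<lambda>s. of_real (k s)) t = (of_real (var_const \<mu> x k t) :: 'a::{real_normed_algebra_1,banach})"
  using conv_tail_of_real[OF assms] by (simp add: var_const_def scaleR_conv_of_real)

lemma res_val_of_real:
  fixes k :: "real \<Rightarrow> real"
  assumes k: "k absolutely_integrable_on {-2..0}"
  shows "res_val c \<mu> (of_real y) (\<lambda>s. of_real (k s)) = (of_real (res_val c \<mu> y k) :: 'a::{real_normed_field,banach})"
proof -
  have "PhiR c (conv_tail \<mu> (\<lambda>s. of_real (k s))) = PhiR c (\<lambda>t. of_real (conv_tail \<mu> k t) :: 'a)"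
    using conv_tail_of_real[OF k] by (rule PhiR_cong)
  also have "\<dots> = of_real (PhiR c (conv_tail \<mu> k))"
    by (intro PhiR_of_real integrable_continuous_interval continuous_on_conv_tail[OF k])
  finally show ?thesis
    by (simp add: res_val_def scaleR_conv_of_real divide_inverse)
qed

lemma eqE_res_elt_of_real:
  fixes c \<mu> y :: real and k :: "real \<Rightarrow> real"
  assumes k: "k absolutely_integrable_on {-2..0}"
  defines "f \<equiv> var_const \<mu> (res_val c \<mu> y k) k"
  shows "eqE (res_elt c \<mu> (of_real y, \<lambda>s. of_real (k s))) (of_real (f 0), \<lambda>t. of_real (f t))"
  unfolding eqE_def res_elt_def f_def
  by (auto intro!: AE_I2 simp: res_val_of_real[OF k] var_const_of_real[OF k])

lemma posE_real_repr:
  assumes h: "inE h" "posE h"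
  obtains y k where "0 \<le> y" "\<And>s. 0 \<le> k s" "k absolutely_integrable_on {-2..0}"
    "eqE h (of_real y, \<lambda>s. of_real (k s))"
proof -
  define k where "k s = max 0 (Re (snd h s))" for s
  have fst_h: "fst h = of_real (Re (fst h))" "0 \<le> Re (fst h)"
    using h(2) by (auto simp: posE_def complex_is_Real_iff complex_eq_iff)
  have AE: "AE s in lborel. s \<in> {-2..0} \<longrightarrow> snd h s = of_real (k s)"
    using h(2) unfolding posE_def
    by (auto elim!: eventually_mono simp: k_def complex_is_Real_iff complex_eq_iff)
  have "(\<lambda>s. of_real (k s) :: complex) absolutely_integrable_on {-2..0}"
    by (rule absolutely_integrable_cong_AE_lborel[OF _ h(1)[unfolded inE_def]])
      (use AE in \<open>auto elim: eventually_mono\<close>)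
  from absolutely_integrable_linear[OF this bounded_linear_Re]
  have "k absolutely_integrable_on {-2..0}"
    by (simp add: o_def)
  moreover have "eqE h (of_real (Re (fst h)), \<lambda>s. of_real (k s))"
    using fst_h AE by (simp add: eqE_def)
  moreover have "0 \<le> k s" for s
    by (simp add: k_def)
  ultimately show ?thesis
    using that fst_h(2) by blast
qed

lemma phiE_cong: "eqE h h' \<Longrightarrow> phiE c h = phiE c h'"
  unfolding eqE_def phiE_def by (auto intro!: integral_cong_AE_lborel[where S="{-2..0}"])

lemma phiE_of_real:
  fixes k :: "real \<Rightarrow> real"
  assumes "k integrable_on {-2..0}"
  shows "phiE c (of_real y, \<lambda>s. of_real (k s)) = of_real (y + c * integral {-2..0} k)"
  using assms by (simp add: phiE_def integral_unique[OF has_integral_of_real[OF integrable_integral]])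

lemma resolvent_pos_repr:
  assumes "0 \<le> c" "\<mu> \<noteq> 0" "\<bar>\<mu>\<bar> \<le> 1/10" "inE h" "posE h"
  obtains y k where "0 \<le> y" "\<And>s. 0 \<le> k s" "k absolutely_integrable_on {-2..0}"
    "phiE c h = of_real (y + c * integral {-2..0} k)"
    "eqE (resolvent c (of_real \<mu>) h)
      (of_real (var_const \<mu> (res_val c \<mu> y k) k 0), \<lambda>t. of_real (var_const \<mu> (res_val c \<mu> y k) k t))"
proof -
  obtain y k where yk: "0 \<le> y" "\<And>s. 0 \<le> k s" "k absolutely_integrable_on {-2..0}"
    and hk: "eqE h (of_real y, \<lambda>s. of_real (k s))"
    using posE_real_repr[OF assms(4,5)] by blast
  have "phiE c h = of_real (y + c * integral {-2..0} k)"
    using phiE_cong[OF hk] phiE_of_real yk(3) by (simp add: absolutely_integrable_on_def)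
  moreover have "eqE (resolvent c (of_real \<mu>) h)
      (of_real (var_const \<mu> (res_val c \<mu> y k) k 0), \<lambda>t. of_real (var_const \<mu> (res_val c \<mu> y k) k t))"
    using eqE_trans[OF eqE_resolvent_res_elt[OF delta_nonzero[OF assms(1-3)] assms(4) hk]
        eqE_res_elt_of_real[OF yk(3)]] .
  ultimately show ?thesis
    using that yk by blast
qed

lemma conv_tail_bounds:
  fixes k :: "real \<Rightarrow> real"
  assumes k0: "\<And>s. 0 \<le> k s" and k: "k absolutely_integrable_on {-2..0}"
    and \<mu>: "\<bar>\<mu>\<bar> \<le> 1/10" and t: "t \<in> {-2..0}"
  shows "4/5 * integral {t..0} k \<le> conv_tail \<mu> k t" "conv_tail \<mu> k t \<le> 5/4 * integral {t..0} k"
proof -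
  have sub: "{t..0} \<subseteq> {-2..0}"
    using t by auto
  have ki: "k integrable_on {t..0}"
    using absolutely_integrable_on_subinterval[OF k sub] by (simp add: absolutely_integrable_on_def)
  have "(\<lambda>s. exp (\<mu> * (t - s)) *\<^sub>R k s) absolutely_integrable_on {t..0}"
    by (rule absolutely_integrable_continuous_scaleR[OF _ absolutely_integrable_on_subinterval[OF k sub]])
      (intro continuous_intros)
  then have eki: "(\<lambda>s. exp (\<mu> * (t - s)) * k s) integrable_on {t..0}"
    by (simp add: absolutely_integrable_on_def)
  have e: "4/5 \<le> exp (\<mu> * (t - s))" "exp (\<mu> * (t - s)) \<le> 5/4" if "s \<in> {t..0}" for s
  proof -
    have "\<bar>\<mu> * (t - s)\<bar> \<le> 1/10 * 2"
      unfolding abs_mult using \<mu> that t by (intro mult_mono) auto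
    then show "4/5 \<le> exp (\<mu> * (t - s))" "exp (\<mu> * (t - s)) \<le> 5/4"
      using exp_bounds_small by auto
  qed
  have "integral {t..0} (\<lambda>s. 4/5 * k s) \<le> integral {t..0} (\<lambda>s. exp (\<mu> * (t - s)) * k s)"
    using ki eki mult_right_mono[OF e(1) k0] by (intro integral_le) auto
  then show "4/5 * integral {t..0} k \<le> conv_tail \<mu> k t"
    by (simp add: conv_tail_def)
  have "integral {t..0} (\<lambda>s. exp (\<mu> * (t - s)) * k s) \<le> integral {t..0} (\<lambda>s. 5/4 * k s)"
    using ki eki mult_right_mono[OF e(2) k0] by (intro integral_le) auto
  then show "conv_tail \<mu> k t \<le> 5/4 * integral {t..0} k"
    by (simp add: conv_tail_def)
qed

lemma PhiR_conv_tail_ge: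
  fixes k :: "real \<Rightarrow> real"
  assumes c: "0 \<le> c" and k0: "\<And>s. 0 \<le> k s" and k: "k absolutely_integrable_on {-2..0}"
    and \<mu>: "\<bar>\<mu>\<bar> \<le> 1/10"
  shows "c / 4 * integral {-2..0} k \<le> PhiR c (conv_tail \<mu> k)"
proof -
  define F where "F = conv_tail \<mu> k"
  define G where "G t = integral {t..0} k" for t
  have ki: "k integrable_on {-2..0}"
    using k by (simp add: absolutely_integrable_on_def)
  have G_anti: "G t' \<le> G t" if "-2 \<le> t" "t \<le> t'" "t' \<le> 0" for t t'
    unfolding G_def using that ki k0 by (intro integral_subset_le) (auto intro: integrable_on_subinterval)
  have G0: "0 \<le> G (-1)"
    unfolding G_def using ki k0 by (intro integral_nonneg) (auto intro: integrable_on_subinterval)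
  have Fi: "F integrable_on {a..b}" if "{a..b} \<subseteq> {-2..0}" for a b
    unfolding F_def using that
    by (intro integrable_continuous_interval continuous_on_subset[OF continuous_on_conv_tail[OF k]])
  note Fb = conv_tail_bounds[OF k0 k \<mu>, folded F_def G_def]
  have "integral {-2..-1} (\<lambda>_::real. 4/5 * G (-1)) \<le> integral {-2..-1} F"
  proof (rule integral_le)
    fix t :: real assume t: "t \<in> {-2..-1}"
    then have "G (-1) \<le> G t"
      by (intro G_anti) auto
    then show "4/5 * G (-1) \<le> F t"
      using Fb(1)[of t] t by auto
  qed (use Fi in auto)
  moreover have "integral {-1..0} F \<le> integral {-1..0} (\<lambda>_::real. 5/4 * G (-1))"
  proof (rule integral_le)
    fix t :: real assume t: "t \<in> {-1..0}"
    then have "G t \<le> G (-1)"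
      by (intro G_anti) auto
    then show "F t \<le> 5/4 * G (-1)"
      using Fb(2)[of t] t by auto
  qed (use Fi in auto)
  moreover have "4/5 * G (-2) \<le> F (-2)" "F 0 = 0"
    using Fb(1)[of "-2"] by (auto simp: F_def)
  moreover have "G (-1) \<le> G (-2)"
    by (rule G_anti) auto
  ultimately have "1/4 * G (-2) \<le> integral {-2..-1} F - integral {-1..0} F + F (-2) - F 0"
    using G0 by simp
  then show ?thesis
    using mult_left_mono[OF _ c] by (simp add: PhiR_def F_def G_def mult.assoc)
qed

lemma mult_res_val_ge:
  fixes k :: "real \<Rightarrow> real"
  assumes c: "0 < c" and \<mu>: "\<mu> \<noteq> 0" "\<bar>\<mu>\<bar> \<le> 1/10"
    and y: "0 \<le> y" and k0: "\<And>s. 0 \<le> k s" and k: "k absolutely_integrable_on {-2..0}"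
  shows "(y + c * integral {-2..0} k) / (4 * (1 + 4 * c)) \<le> \<mu> * res_val c \<mu> y k"
proof -
  define N where "N = y + PhiR c (conv_tail \<mu> k)"
  define q where "q = delta c \<mu> / \<mu>"
  have q: "1 \<le> q" "q \<le> 1 + 4 * c"
    unfolding q_def using delta_quot_bounds[OF _ \<mu>] c by auto
  have "0 \<le> integral {-2..0} k"
    using k0 k by (intro integral_nonneg) (auto simp: absolutely_integrable_on_def)
  then have P: "0 \<le> y + c * integral {-2..0} k"
    using y c by simp
  have N: "(y + c * integral {-2..0} k) / 4 \<le> N"
    using PhiR_conv_tail_ge[OF _ k0 k \<mu>(2), of c] c y P by (simp add: N_def)
  have "(y + c * integral {-2..0} k) / (4 * (1 + 4 * c)) = (y + c * integral {-2..0} k) / 4 / (1 + 4 * c)"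
    by simp
  also have "\<dots> \<le> N / (1 + 4 * c)"
    using N c by (intro divide_right_mono) auto
  also have "\<dots> \<le> N / q"
    using N P q by (intro divide_left_mono) auto
  also have "\<dots> = \<mu> * res_val c \<mu> y k"
    using \<mu>(1) q by (auto simp: N_def q_def res_val_def field_simps)
  finally show ?thesis .
qed

lemma res_val_ge_pos:
  fixes k :: "real \<Rightarrow> real"
  assumes c: "0 < c" and \<mu>: "0 < \<mu>" "\<mu> \<le> 1/10"
    and y: "0 \<le> y" and k0: "\<And>s. 0 \<le> k s" and k: "k absolutely_integrable_on {-2..0}"
  shows "(y + c * integral {-2..0} k) / (4 * ((1 + 4 * c) * \<mu>)) \<le> res_val c \<mu> y k"
proof -
  have "(y + c * integral {-2..0} k) / (4 * (1 + 4 * c)) \<le> \<mu> * res_val c \<mu> y k"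
    using mult_res_val_ge[OF c _ _ y k0 k] \<mu> by simp
  then have "(y + c * integral {-2..0} k) / (4 * (1 + 4 * c)) / \<mu> \<le> res_val c \<mu> y k"
    unfolding pos_divide_le_eq[OF \<mu>(1)] by (simp add: mult.commute)
  then show ?thesis
    by (simp only: divide_divide_eq_left mult.assoc)
qed

lemma var_const_res_val_ge:
  fixes k :: "real \<Rightarrow> real"
  assumes c: "0 < c" and \<mu>: "0 < \<mu>" "\<mu> \<le> 1/10"
    and y: "0 \<le> y" and k0: "\<And>s. 0 \<le> k s" and k: "k absolutely_integrable_on {-2..0}"
    and t: "t \<in> {-2..0}"
  shows "(y + c * integral {-2..0} k) / (5 * (1 + 4 * c) * \<mu>) \<le> var_const \<mu> (res_val c \<mu> y k) k t"
proof -
  define P where "P = y + c * integral {-2..0} k"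
  define x where "x = res_val c \<mu> y k"
  define B where "B = (1 + 4 * c) * \<mu>"
  have "0 \<le> integral {-2..0} k"
    using k0 k by (intro integral_nonneg) (auto simp: absolutely_integrable_on_def)
  then have "0 \<le> P / (4 * B)"
    using y c \<mu> by (simp add: P_def B_def)
  moreover have x: "P / (4 * B) \<le> x"
    using res_val_ge_pos[OF c \<mu> y k0 k] by (simp add: P_def B_def x_def)
  ultimately have x0: "0 \<le> x"
    by linarith
  have "- (1/5) \<le> \<mu> * t"
    using \<mu> t mult_left_mono[of "-2" t \<mu>] by auto
  then have "4/5 \<le> exp (\<mu> * t)"
    using exp_ge_add_one_self[of "\<mu> * t"] by linarith
  have "0 \<le> integral {t..0} k"
    using k0 absolutely_integrable_on_subinterval[OF k] t
    by (intro integral_nonneg) (auto simp: absolutely_integrable_on_def)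
  then have F0: "0 \<le> conv_tail \<mu> k t"
    using conv_tail_bounds(1)[OF k0 k _ t, of \<mu>] \<mu> by auto
  have "0 < B"
    using c \<mu> by (simp add: B_def)
  have "P / (5 * (1 + 4 * c) * \<mu>) = P / (5 * B)"
    by (simp add: B_def mult.assoc)
  also have "\<dots> = 4/5 * (P / (4 * B))"
    using \<open>0 < B\<close> by (simp add: field_simps)
  also have "\<dots> \<le> 4/5 * x"
    using x by simp
  also have "\<dots> \<le> exp (\<mu> * t) * x"
    using \<open>4/5 \<le> exp (\<mu> * t)\<close> x0 by (rule mult_right_mono)
  also have "\<dots> \<le> var_const \<mu> x k t"
    using F0 by (simp add: var_const_def)
  finally show ?thesis
    by (simp add: P_def x_def)
qed

lemma abs_le_tenth_if_neg_threshold: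
  fixes c \<mu> :: real
  assumes "0 < c" "- c / (10 * (1 + 4 * c)) < \<mu>" "\<mu> < 0"
  shows "\<bar>\<mu>\<bar> \<le> 1/10"
proof -
  have "c / (10 * (1 + 4 * c)) \<le> 1/10"
    using assms(1) by (simp add: field_simps)
  then show ?thesis
    using assms(2,3) by linarith
qed

lemma res_val_le_neg:
  fixes k :: "real \<Rightarrow> real"
  assumes c: "0 < c" and \<mu>: "- c / (10 * (1 + 4 * c)) < \<mu>" "\<mu> < 0"
    and y: "0 \<le> y" and k0: "\<And>s. 0 \<le> k s" and k: "k absolutely_integrable_on {-2..0}"
  shows "res_val c \<mu> y k \<le> - (5 / (2 * c)) * (y + c * integral {-2..0} k)"
proof -
  define P where "P = y + c * integral {-2..0} k"
  define B where "B = (1 + 4 * c) * (- \<mu>)"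
  have "0 \<le> integral {-2..0} k"
    using k0 k by (intro integral_nonneg) (auto simp: absolutely_integrable_on_def)
  then have P: "0 \<le> P"
    using y c by (simp add: P_def)
  have B: "0 < B" "B \<le> c / 10"
  proof -
    show "0 < B"
      unfolding B_def using \<mu> c by (intro mult_pos_pos) auto
    have "- \<mu> < c / (10 * (1 + 4 * c))"
      using \<mu> by linarith
    moreover have "0 < 10 * (1 + 4 * c)"
      using c by simp
    ultimately have "- \<mu> * (10 * (1 + 4 * c)) < c"
      by (simp only: pos_less_divide_eq)
    then show "B \<le> c / 10"
      by (simp add: B_def algebra_simps)
  qed
  have "P / (4 * (1 + 4 * c)) \<le> \<mu> * res_val c \<mu> y k"
    using mult_res_val_ge[OF c _ abs_le_tenth_if_neg_threshold[OF c \<mu>] y k0 k] \<mu> by (simp add: P_def)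
  then have "res_val c \<mu> y k \<le> P / (4 * (1 + 4 * c)) / \<mu>"
    unfolding neg_le_divide_eq[OF \<mu>(2)] by (simp add: mult.commute)
  also have "\<dots> = - (P / (4 * B))"
    by (simp add: B_def mult.assoc)
  also have "\<dots> \<le> - (P / (4 * (c / 10)))"
    using divide_left_mono[of "4 * B" "4 * (c / 10)" P] B P c by simp
  finally show ?thesis
    using c by (simp add: P_def field_simps)
qed

lemma var_const_res_val_le:
  fixes k :: "real \<Rightarrow> real"
  assumes c: "0 < c" and \<mu>: "- c / (10 * (1 + 4 * c)) < \<mu>" "\<mu> < 0"
    and y: "0 \<le> y" and k0: "\<And>s. 0 \<le> k s" and k: "k absolutely_integrable_on {-2..0}"
    and t: "t \<in> {-2..0}"
  shows "var_const \<mu> (res_val c \<mu> y k) k t \<le> - 5 / (4 * c) * (y + c * integral {-2..0} k)"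
proof -
  define P where "P = y + c * integral {-2..0} k"
  define x where "x = res_val c \<mu> y k"
  have x: "x \<le> - (5 / (2 * c)) * P"
    using res_val_le_neg[OF c \<mu> y k0 k] by (simp add: P_def x_def)
  have "0 \<le> integral {-2..0} k"
    using k0 k by (intro integral_nonneg) (auto simp: absolutely_integrable_on_def)
  then have "0 \<le> 5 / (2 * c) * P"
    using y c by (simp add: P_def)
  with x have x0: "x \<le> 0"
    by linarith
  have "1 \<le> exp (\<mu> * t)"
    using \<mu> t by (simp add: mult_nonpos_nonpos)
  then have "exp (\<mu> * t) * x \<le> x"
    using x0 mult_right_mono_neg[of 1 "exp (\<mu> * t)" x] by simp
  moreover have "conv_tail \<mu> k t \<le> 5 / (4 * c) * P"
  proof -
    have "integral {t..0} k \<le> integral {-2..0} k"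
      using k0 k t by (intro integral_subset_le)
        (auto simp: absolutely_integrable_on_def intro: integrable_on_subinterval)
    moreover have "c * integral {-2..0} k \<le> P"
      using y by (simp add: P_def)
    ultimately have "c * integral {t..0} k \<le> P"
      using c by (meson mult_left_mono order_trans less_imp_le)
    then have "5/4 * integral {t..0} k \<le> 5 / (4 * c) * P"
      using c by (simp add: field_simps)
    then show ?thesis
      using conv_tail_bounds(2)[OF k0 k abs_le_tenth_if_neg_threshold[OF c \<mu>] t] by linarith
  qed
  ultimately have "var_const \<mu> x k t \<le> - (5 / (2 * c)) * P + 5 / (4 * c) * P"
    using x by (simp add: var_const_def)
  also have "\<dots> = - 5 / (4 * c) * P"
    using c by (simp add: field_simps)
  finally show ?thesis
    by (simp add: P_def x_def)
qed

lemma posE_diffE_scaled_unit: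
  assumes v: "eqE v (of_real (f 0), \<lambda>t. of_real (f t))" and f: "\<And>t. t \<in> {-2..0} \<Longrightarrow> a * b \<le> f t"
  shows "posE (diffE v (scaleE (of_real a) (scaleE (of_real b) uE)))"
proof -
  have "AE s in lborel. s \<in> {-2..0} \<longrightarrow> snd v s = of_real (f s)"
    using v by (simp add: eqE_def)
  then have "AE s in lborel. s \<in> {-2..0} \<longrightarrow> snd v s - of_real a * (of_real b * 1) \<in> \<real> \<and>
      0 \<le> Re (snd v s - of_real a * (of_real b * 1))"
    by (rule eventually_mono) (use f in auto)
  moreover have "fst v = of_real (f 0)"
    using v by (simp add: eqE_def)
  ultimately show ?thesis
    using f[of 0] by (simp add: posE_def diffE_def scaleE_def uE_def)
qed

lemma posE_diffE_neg_scaled_unit: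
  assumes v: "eqE v (of_real (f 0), \<lambda>t. of_real (f t))" and a: "0 \<le> a"
    and f: "\<And>t. t \<in> {-2..0} \<Longrightarrow> a * f t \<le> - b"
  shows "posE (diffE (scaleE (-1) (scaleE (of_real b) uE)) (scaleE (of_real a) v))"
proof -
  have "AE s in lborel. s \<in> {-2..0} \<longrightarrow> snd v s = of_real (f s)"
    using v by (simp add: eqE_def)
  then have "AE s in lborel. s \<in> {-2..0} \<longrightarrow> -1 * (of_real b * 1) - of_real a * snd v s \<in> \<real> \<and>
      0 \<le> Re (-1 * (of_real b * 1) - of_real a * snd v s)"
    by (rule eventually_mono) (use f in auto)
  moreover have "fst v = of_real (f 0)"
    using v by (simp add: eqE_def)
  ultimately show ?thesis
    using f[of 0] by (simp add: posE_def diffE_def scaleE_def uE_def)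
qed

lemma resolvent_succeq_tensor:
  assumes c: "0 < c" and \<mu>: "0 < \<mu>" "\<mu> \<le> 1/10"
  shows "succeqE (resolvent c (of_real \<mu>)) (tensorE uE (phiE c))"
  unfolding succeqE_def
proof (intro exI conjI allI impI)
  show "0 < 1 / (5 * (1 + 4 * c) * \<mu>)"
    using c \<mu> by simp
  fix h assume "inE h \<and> posE h"
  then obtain y k where yk: "0 \<le> y" "\<And>s. 0 \<le> k s" "k absolutely_integrable_on {-2..0}"
    and phi: "phiE c h = of_real (y + c * integral {-2..0} k)"
    and R: "eqE (resolvent c (of_real \<mu>) h)
      (of_real (var_const \<mu> (res_val c \<mu> y k) k 0), \<lambda>t. of_real (var_const \<mu> (res_val c \<mu> y k) k t))"
    using resolvent_pos_repr[of c \<mu> h] c \<mu> by auto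
  show "posE (diffE (resolvent c (of_real \<mu>) h)
      (scaleE (of_real (1 / (5 * (1 + 4 * c) * \<mu>))) (tensorE uE (phiE c) h)))"
    unfolding tensorE_def phi
    by (rule posE_diffE_scaled_unit[OF R]) (use var_const_res_val_ge[OF c \<mu> yk] in simp)
qed

lemma resolvent_preceq_neg_tensor:
  assumes c: "0 < c" and \<mu>: "- c / (10 * (1 + 4 * c)) < \<mu>" "\<mu> < 0"
  shows "succeqE (\<lambda>h. scaleE (-1) (tensorE uE (phiE c) h)) (resolvent c (of_real \<mu>))"
  unfolding succeqE_def
proof (intro exI conjI allI impI)
  show "0 < 4 * c / 5"
    using c by simp
  have \<mu>_small: "\<bar>\<mu>\<bar> \<le> 1/10"
    by (rule abs_le_tenth_if_neg_threshold[OF c \<mu>])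
  fix h assume "inE h \<and> posE h"
  then obtain y k where yk: "0 \<le> y" "\<And>s. 0 \<le> k s" "k absolutely_integrable_on {-2..0}"
    and phi: "phiE c h = of_real (y + c * integral {-2..0} k)"
    and R: "eqE (resolvent c (of_real \<mu>) h)
      (of_real (var_const \<mu> (res_val c \<mu> y k) k 0), \<lambda>t. of_real (var_const \<mu> (res_val c \<mu> y k) k t))"
    using resolvent_pos_repr[of c \<mu> h] c \<mu> \<mu>_small by auto
  show "posE (diffE (scaleE (-1) (tensorE uE (phiE c) h)) (scaleE (of_real (4 * c / 5)) (resolvent c (of_real \<mu>) h)))"
    unfolding tensorE_def phi
  proof (rule posE_diffE_neg_scaled_unit[OF R])
    fix t :: real assume "t \<in> {-2..0}"
    have "4 * c / 5 * var_const \<mu> (res_val c \<mu> y k) k t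
        \<le> 4 * c / 5 * (- 5 / (4 * c) * (y + c * integral {-2..0} k))"
      by (rule mult_left_mono[OF var_const_res_val_le[OF c \<mu> yk \<open>t \<in> {-2..0}\<close>]]) (use c in simp)
    also have "\<dots> = - (y + c * integral {-2..0} k)"
      using c by (simp add: field_simps)
    finally show "4 * c / 5 * var_const \<mu> (res_val c \<mu> y k) k t \<le> - (y + c * integral {-2..0} k)" .
  qed (use c in simp)
qed

theorem theorem6p11:
  fixes c :: real
  assumes "c > 0"
  shows "(\<exists>\<epsilon>>0. (\<forall>\<mu>\<in>{0<..<\<epsilon>}. in_resolvent_set c (of_real \<mu>)) \<and>
            (\<forall>\<mu>\<in>{0<..<\<epsilon>}. succeqE (resolvent c (of_real \<mu>)) (tensorE uE (phiE c))))
       \<and> (\<exists>\<epsilon>>0. (\<forall>\<mu>\<in>{-\<epsilon><..<0}. in_resolvent_set c (of_real \<mu>)) \<and>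
            (\<forall>\<mu>\<in>{-\<epsilon><..<0}. succeqE (\<lambda>h. scaleE (-1) (tensorE uE (phiE c) h))
                                       (resolvent c (of_real \<mu>))))"
proof (intro conjI)
  show "\<exists>\<epsilon>>0. (\<forall>\<mu>\<in>{0<..<\<epsilon>}. in_resolvent_set c (of_real \<mu>)) \<and>
      (\<forall>\<mu>\<in>{0<..<\<epsilon>}. succeqE (resolvent c (of_real \<mu>)) (tensorE uE (phiE c)))"
  proof (intro exI[of _ "1/10"] conjI ballI)
    fix \<mu> :: real assume "\<mu> \<in> {0<..<1/10}"
    then have \<mu>: "0 < \<mu>" "\<mu> \<le> 1/10" by auto
    show "in_resolvent_set c (of_real \<mu>)"
      using assms \<mu> by (intro in_resolvent_set_if_delta_nonzero delta_nonzero) auto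
    show "succeqE (resolvent c (of_real \<mu>)) (tensorE uE (phiE c))"
      using resolvent_succeq_tensor[OF assms \<mu>] .
  qed simp
  define \<epsilon> where "\<epsilon> = c / (10 * (1 + 4 * c))"
  show "\<exists>\<epsilon>>0. (\<forall>\<mu>\<in>{-\<epsilon><..<0}. in_resolvent_set c (of_real \<mu>)) \<and>
      (\<forall>\<mu>\<in>{-\<epsilon><..<0}. succeqE (\<lambda>h. scaleE (-1) (tensorE uE (phiE c) h)) (resolvent c (of_real \<mu>)))"
  proof (intro exI[of _ \<epsilon>] conjI ballI)
    show "0 < \<epsilon>"
      using assms by (simp add: \<epsilon>_def)
    fix \<mu> :: real assume "\<mu> \<in> {-\<epsilon><..<0}"
    then have \<mu>: "- c / (10 * (1 + 4 * c)) < \<mu>" "\<mu> < 0"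
      by (auto simp: \<epsilon>_def)
    show "in_resolvent_set c (of_real \<mu>)"
      using assms \<mu> abs_le_tenth_if_neg_threshold[OF assms \<mu>]
      by (intro in_resolvent_set_if_delta_nonzero delta_nonzero) auto
    show "succeqE (\<lambda>h. scaleE (-1) (tensorE uE (phiE c) h)) (resolvent c (of_real \<mu>))"
      using resolvent_preceq_neg_tensor[OF assms \<mu>] .
  qed
qed

end
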